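(* Let $F$ be a distribution on $\mathbb{R}$ with a density, and let $X, X_1, X_2,\ldots$ be i.i.d. with distribution $F$ and mean $\mu$. Suppose $\bar F(x)=1-F(x)=L(x)x^{-\alpha}$ for a slowly varying $L$ and $\alpha>2$, and $E|X|^{2+\delta}<\infty$ for some $\delta>0$. Let $\gamma=\gamma(n)=n\mu+\omega(\sqrt{n\log n})$ and let $u=u(n)\le \mu+O\big((\gamma-n\mu)/\sqrt{\log n}\big)$. Then, as $n\to\infty$, $$\tilde p(\tilde F_u)-\tilde p(F) = -\tilde p(F)(1+o(1)).$$
   Context: $S_n=X_1+\cdots+X_n$. For a distribution $G$, $\tilde p(G)=P_G(S_n\ge\gamma)$ is the probability that $S_n\ge\gamma$ when $X_1,\ldots,X_n$ are i.i.d. with law $G$. The truncated distribution $\tilde F_u$ is $\tilde F_u(x)=F(x)/F(u)$ for $x\le u$ and $1$ for $x>u$. $a_n=o(b_n)$: $a_n/b_n\to0$; $a_n=\omega(b_n)$: $a_n/b_n\to\infty$; $a_n=O(b_n)$: $|a_n/b_n|$ bounded for large $n$. *)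

theory Defs
  imports "HOL-Probability.Probability"
begin

definition cdf_of :: "real measure \<Rightarrow> real \<Rightarrow> real" where
  "cdf_of G x = measure G {..x}"

definition ptilde :: "real measure \<Rightarrow> nat \<Rightarrow> real \<Rightarrow> real" where
  "ptilde G n \<gamma> =
     measure (PiM {..<n} (\<lambda>_. G))
       {x \<in> space (PiM {..<n} (\<lambda>_. G)). \<gamma> \<le> (\<Sum>i<n. x i)}"

text \<open>Truncated law: cdf F(x)/F(u) for x <= u and 1 for x > u,
  i.e. the law of X conditioned on X <= u.\<close>
definition truncated :: "real measure \<Rightarrow> real \<Rightarrow> real measure" where
  "truncated G u = density G (\<lambda>x. ennreal (indicator {..u} x / cdf_of G u))"

definition slowly_varying :: "(real \<Rightarrow> real) \<Rightarrow> bool" where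
  "slowly_varying L \<longleftrightarrow>
     (\<forall>\<^sub>F x in at_top. L x > 0) \<and>
     (\<forall>t>0. ((\<lambda>x. L (t * x) / L x) \<longlongrightarrow> 1) at_top)"

end

theory Submission
  imports Defs
begin

text \<open>Write \<open>x = \<gamma> - n \<mu>\<close>. For the untruncated law, Chebyshev's inequality shows that with
  probability at least \<open>1/2\<close> the summands \<open>X\<^sub>2, \<dots>, X\<^sub>n\<close> add up to at least \<open>(n - 1) \<mu> - O(\<surd>n)\<close>.
  As \<open>x \<gg> \<surd>n\<close>, independence gives \<open>ptilde F \<ge> P(X\<^sub>1 \<ge> 2 x) / 2\<close>, and a Potter-type bound for
  the regularly varying tail makes this at least \<open>c x powr -(\<alpha> + 1)\<close>.
  Under the truncated law every summand is at most \<open>u \<le> \<mu> + O(x / \<surd>log n)\<close>. At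
  \<open>s = A log x / x\<close> the factor \<open>exp (s (u - \<mu>))\<close> is then at most \<open>x powr (\<delta> / 2)\<close>, which the
  \<open>(2 + \<delta>)\<close>-th moment absorbs, so the moment generating function of \<open>X - \<mu>\<close> is \<open>1 + O(s\<^sup>2)\<close>.
  Chernoff's bound gives \<open>ptilde F\<^sub>u \<le> x powr (1 - A)\<close>, because \<open>x \<gg> \<surd>(n log n)\<close>.
  With \<open>A = \<alpha> + 4\<close> the ratio \<open>ptilde F\<^sub>u / ptilde F\<close> is \<open>O(x powr -2)\<close> and tends to \<open>0\<close>.\<close>

section \<open>Elementary inequalities\<close>

lemma exp_le_second_order:
  fixes w :: real
  shows "exp w \<le> 1 + w + w\<^sup>2 / 2 * exp (max w 0)"
proof (cases "w \<le> 0")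
  case True
  obtain t where "exp w = (\<Sum>m<3. w ^ m / fact m) + exp t / fact 3 * w ^ 3"
    using Maclaurin_exp_le[of w 3] by blast
  moreover have "w ^ 3 \<le> 0" using True by (simp add: power_le_zero_eq)
  then have "exp t / fact 3 * w ^ 3 \<le> 0" by (intro mult_nonneg_nonpos) auto
  ultimately show ?thesis
    using True by (simp add: numeral_3_eq_3 power2_eq_square)
next
  case False
  obtain t where t: "\<bar>t\<bar> \<le> \<bar>w\<bar>" "exp w = (\<Sum>m<2. w ^ m / fact m) + exp t / fact 2 * w ^ 2"
    using Maclaurin_exp_le[of w 2] by blast
  have "exp t \<le> exp w" using t(1) False by simp
  then have "exp t / 2 * w\<^sup>2 \<le> w\<^sup>2 / 2 * exp w"
    by (simp add: mult.commute mult_right_mono)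
  then show ?thesis using t(2) False by (simp add: numeral_2_eq_2)
qed

lemma square_mult_exp_le:
  fixes s z D \<delta> :: real
  assumes s: "s > 0" and zD: "z \<le> D" and \<delta>: "\<delta> > 0"
  shows "z\<^sup>2 * exp (s * max z 0) \<le> exp 1 * z\<^sup>2 + \<bar>z\<bar> powr (2 + \<delta>) * s powr \<delta> * exp (s * D)"
proof (cases "s * z \<le> 1")
  case True
  then have "s * max z 0 \<le> 1" using s by (auto simp: max_def)
  then have "z\<^sup>2 * exp (s * max z 0) \<le> exp 1 * z\<^sup>2"
    by (subst mult.commute, intro mult_left_mono) auto
  then show ?thesis by (smt (verit) exp_ge_zero mult_nonneg_nonneg powr_ge_zero)
next
  case False
  then have z: "z > 0" using s by (smt (verit) mult_nonpos_nonneg mult_nonneg_nonpos)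
  \<comment> \<open>\<open>sz > 1\<close>, so the extra factor \<open>(sz)\<^sup>\<delta>\<close> only increases \<open>z\<^sup>2\<close>.\<close>
  have "z\<^sup>2 = z powr (2 + \<delta>) * (1 / z) powr \<delta>"
    using z by (simp add: powr_add powr_divide field_simps powr_numeral[symmetric] del: powr_numeral)
  also have "\<dots> \<le> z powr (2 + \<delta>) * s powr \<delta>"
    using False z \<delta> by (intro mult_left_mono powr_mono2) (auto simp: field_simps)
  finally have "z\<^sup>2 \<le> z powr (2 + \<delta>) * s powr \<delta>" .
  moreover have "exp (s * max z 0) \<le> exp (s * D)" using z zD s by simp
  ultimately have "z\<^sup>2 * exp (s * max z 0) \<le> z powr (2 + \<delta>) * s powr \<delta> * exp (s * D)"
    by (intro mult_mono) auto
  then show ?thesis using z by (simp add: add_increasing)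
qed

lemma exp_le_moment_polynomial:
  fixes s z D \<delta> :: real
  assumes s: "s > 0" and "z \<le> D" and "\<delta> > 0"
  shows "exp (s * z) \<le> 1 + s * z + s\<^sup>2 / 2 * (exp 1 * z\<^sup>2 + \<bar>z\<bar> powr (2 + \<delta>) * s powr \<delta> * exp (s * D))"
proof -
  have "exp (s * z) \<le> 1 + s * z + (s * z)\<^sup>2 / 2 * exp (max (s * z) 0)" by (rule exp_le_second_order)
  also have "(s * z)\<^sup>2 / 2 * exp (max (s * z) 0) = s\<^sup>2 / 2 * (z\<^sup>2 * exp (s * max z 0))"
    using s by (simp add: power_mult_distrib max_def mult_le_0_iff)
  also have "\<dots> \<le> s\<^sup>2 / 2 * (exp 1 * z\<^sup>2 + \<bar>z\<bar> powr (2 + \<delta>) * s powr \<delta> * exp (s * D))"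
    using square_mult_exp_le[OF assms] by (intro mult_left_mono) simp_all
  finally show ?thesis by simp
qed

lemma ln_le_two_sqrt:
  fixes x :: real
  assumes "x > 0"
  shows "ln x \<le> 2 * sqrt x"
  using ln_bound[of "sqrt x"] assms by (simp add: ln_sqrt)

lemma one_le_ln_nat:
  assumes "n \<ge> 3"
  shows "1 \<le> ln (real n)"
proof -
  have "exp 1 \<le> real n" using e_less_272 assms by linarith
  then show ?thesis using assms by (simp add: ln_ge_iff)
qed

lemma abs_powr_le_one_plus_powr:
  fixes z p q :: real
  assumes "0 \<le> q" "q \<le> p"
  shows "\<bar>z\<bar> powr q \<le> 1 + \<bar>z\<bar> powr p"
proof (cases "\<bar>z\<bar> \<le> 1")
  case True
  then have "\<bar>z\<bar> powr q \<le> 1" using assms by (intro powr_le1) auto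
  then show ?thesis by (smt (verit) powr_ge_zero)
next
  case False
  then show ?thesis using assms by (smt (verit) powr_mono)
qed

lemma abs_diff_powr_le:
  fixes a b p :: real
  assumes "0 \<le> p"
  shows "\<bar>a - b\<bar> powr p \<le> 2 powr p * (\<bar>a\<bar> powr p + \<bar>b\<bar> powr p)"
proof -
  have "\<bar>a - b\<bar> powr p \<le> (2 * max \<bar>a\<bar> \<bar>b\<bar>) powr p"
    using assms by (intro powr_mono2) auto
  also have "\<dots> = 2 powr p * max \<bar>a\<bar> \<bar>b\<bar> powr p" by (simp add: powr_mult)
  also have "max \<bar>a\<bar> \<bar>b\<bar> powr p \<le> \<bar>a\<bar> powr p + \<bar>b\<bar> powr p"
    by (cases "\<bar>a\<bar> \<le> \<bar>b\<bar>") (simp_all add: max_def)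
  finally show ?thesis by simp
qed

lemma indicator_mult_one_minus_square_le:
  fixes y w a t :: real
  assumes "t > 0"
  shows "indicator {a..} y * (1 - w\<^sup>2 / t\<^sup>2) \<le> (indicator {a - t..} (y + w) :: real)"
proof (cases "y \<ge> a \<and> w < - t")
  case True
  then have "t\<^sup>2 < w\<^sup>2" using assms by (simp add: abs_le_square_iff[symmetric] less_le_not_le)
  then show ?thesis using True assms by (simp add: indicator_def)
qed (auto simp: indicator_def)

lemma exp_mult_one_plus_power_le_powr:
  fixes x A c :: real
  assumes x: "x > 1" and c: "c \<ge> 0" and n_small: "A\<^sup>2 * c * real n * ln x \<le> x\<^sup>2"
  shows "exp (- (A * ln x / x) * x) * (1 + (A * ln x / x)\<^sup>2 * c) ^ n \<le> x powr (1 - A)"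
proof -
  define y where "y = (A * ln x / x)\<^sup>2 * c"
  have "real n * y = (A\<^sup>2 * c * real n * ln x) * (ln x / x\<^sup>2)"
    using x by (simp add: y_def power2_eq_square field_simps)
  also have "\<dots> \<le> x\<^sup>2 * (ln x / x\<^sup>2)" using n_small x by (intro mult_right_mono) auto
  also have "\<dots> = ln x" using x by simp
  finally have ny: "real n * y \<le> ln x" .
  have "(1 + y) ^ n \<le> exp y ^ n"
    using c by (intro power_mono) (auto simp: y_def add.commute exp_ge_add_one_self)
  also have "\<dots> = exp (real n * y)" by (simp add: exp_of_nat_mult)
  also have "\<dots> \<le> exp (ln x)" using ny by simp
  finally have "exp (- (A * ln x / x) * x) * (1 + y) ^ n \<le> exp (- A * ln x) * exp (ln x)"
    using x c by (intro mult_mono) (auto simp: y_def)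
  also have "\<dots> = exp ((1 - A) * ln x)" by (simp add: exp_add[symmetric] algebra_simps)
  also have "\<dots> = x powr (1 - A)" using x by (simp add: powr_def)
  finally show ?thesis by (simp add: y_def)
qed

lemma mult_n_ln_le_square:
  fixes x H Q :: real
  assumes n: "n \<ge> 3" and Q: "Q \<ge> 0" and H: "H \<ge> 1" "H \<ge> 2 * Q"
    and x: "x \<ge> H * sqrt (real n * ln (real n))"
  shows "Q * real n * ln x \<le> x\<^sup>2"
proof -
  have ln_n: "ln (real n) \<ge> 1" using one_le_ln_nat[OF n] .
  have "1 * 1 \<le> real n * ln (real n)" using ln_n n by (intro mult_mono) auto
  then have "1 * 1 \<le> H * sqrt (real n * ln (real n))" using H by (intro mult_mono) auto
  then have x0: "x > 0" using x by simp
  define y where "y = x\<^sup>2 / real n"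
  have x2: "x\<^sup>2 = real n * y" using n by (simp add: y_def)
  have "H\<^sup>2 * (real n * ln (real n)) \<le> x\<^sup>2"
    using power_mono[OF x, of 2] ln_n H n by (simp add: power_mult_distrib)
  then have yH: "H\<^sup>2 * ln (real n) \<le> y" using n by (simp add: x2 algebra_simps)
  have HH: "H \<le> H\<^sup>2" using H by (simp add: power2_eq_square)
  have "H\<^sup>2 * 1 \<le> H\<^sup>2 * ln (real n)" using ln_n by (intro mult_left_mono) auto
  then have "H\<^sup>2 \<le> y" using yH by linarith
  then have Hy: "H \<le> sqrt y" and y0: "y > 0" using H HH by (auto intro: real_le_rsqrt)
  have "2 * ln x = ln (x\<^sup>2)" using x0 by (simp add: ln_realpow)
  also have "\<dots> = ln (real n) + ln y" using n y0 by (simp add: x2 ln_mult)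
  finally have "2 * ln x = ln (real n) + ln y" .
  moreover have "Q * ln (real n) \<le> H\<^sup>2 * ln (real n)"
    using H HH Q ln_n by (intro mult_right_mono) auto
  then have "Q * ln (real n) \<le> y" using yH by linarith
  moreover have "Q * ln y \<le> y"
  proof -
    have "Q * ln y \<le> Q * (2 * sqrt y)" using Q y0 ln_le_two_sqrt by (intro mult_left_mono) auto
    also have "\<dots> = (2 * Q) * sqrt y" by simp
    also have "\<dots> \<le> sqrt y * sqrt y" using H Hy y0 by (intro mult_right_mono) auto
    finally show ?thesis using y0 by simp
  qed
  ultimately have "Q * (2 * ln x) \<le> 2 * y" by (simp add: distrib_left)
  then show ?thesis using n by (simp add: x2 mult_left_mono algebra_simps)
qed

lemma powr_mult_exp_le:
  fixes x A C \<delta> l :: real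
  assumes x: "x \<ge> 1" and A: "A > 0" and \<delta>: "\<delta> > 0" and l: "l > 0"
    and AC: "A * C / sqrt l \<le> \<delta> / 2"
  shows "(A * ln x / x) powr \<delta> * exp ((A * ln x / x) * (C * x / sqrt l)) \<le> (2 * A) powr \<delta>"
proof -
  have ln_x: "ln x \<ge> 0" using x by simp
  have "(A * ln x / x) * (C * x / sqrt l) = (A * C / sqrt l) * ln x" using x by (simp add: field_simps)
  also have "\<dots> \<le> \<delta> / 2 * ln x" using AC ln_x by (intro mult_right_mono) auto
  finally have "exp ((A * ln x / x) * (C * x / sqrt l)) \<le> sqrt x powr \<delta>"
    using x by (simp add: powr_def ln_sqrt mult.commute)
  then have "(A * ln x / x) powr \<delta> * exp ((A * ln x / x) * (C * x / sqrt l))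
      \<le> (A * ln x / x) powr \<delta> * sqrt x powr \<delta>" by (intro mult_left_mono) auto
  also have "\<dots> = (A * ln x / x * sqrt x) powr \<delta>" using x A ln_x by (intro powr_mult[symmetric])
  also have "A * ln x / x * sqrt x = A * (ln x / sqrt x)"
    using x by (simp add: field_simps real_sqrt_mult_self)
  also have "(A * (ln x / sqrt x)) powr \<delta> \<le> (2 * A) powr \<delta>"
    using ln_le_two_sqrt[of x] x A ln_x \<delta>
    by (intro powr_mono2) (auto simp: divide_le_eq mult.commute)
  finally show ?thesis .
qed

section \<open>Distribution functions and regularly varying tails\<close>

lemma cdf_of_mono:
  assumes "prob_space M" "sets M = sets borel" "a \<le> b"
  shows "cdf_of M a \<le> cdf_of M b"
proof -
  interpret prob_space M by fact
  show ?thesis unfolding cdf_of_def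
    using assms by (intro finite_measure_mono) auto
qed

lemma one_minus_cdf_of_le_measure_atLeast:
  assumes "prob_space M" and sM: "sets M = sets borel"
  shows "1 - cdf_of M a \<le> measure M {a..}"
proof -
  interpret prob_space M by fact
  have "1 - cdf_of M a = measure M (space M - {..a})"
    using sM by (subst finite_measure_compl) (auto simp: cdf_of_def prob_space)
  also have "\<dots> \<le> measure M {a..}"
    using sM by (intro finite_measure_mono) (auto simp: sets_eq_imp_space_eq[OF sM])
  finally show ?thesis .
qed

lemma cdf_of_mean_pos:
  assumes "prob_space M" "sets M = sets borel"
    and int: "integrable M (\<lambda>v. v - \<mu>)" and mean: "integral\<^sup>L M (\<lambda>v. v - \<mu>) = 0"
  shows "cdf_of M \<mu> > 0"
proof (rule ccontr)
  interpret prob_space M by fact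
  assume "\<not> cdf_of M \<mu> > 0"
  then have "measure M {..\<mu>} = 0" by (simp add: cdf_of_def measure_nonneg leD antisym)
  then have "AE v in M. v \<notin> {..\<mu>}"
    using assms(2) by (intro AE_not_in) (auto simp: emeasure_eq_measure)
  then have gt: "AE v in M. \<mu> < v" by auto
  then have "AE v in M. 0 \<le> v - \<mu>" by auto
  then have "AE v in M. v - \<mu> = 0"
    using integral_nonneg_eq_0_iff_AE[OF int] mean by simp
  with gt have "AE v in M. False" by eventually_elim simp
  then show False by (simp add: AE_False)
qed

lemma slowly_varying_doubling_lower:
  assumes "slowly_varying L"
  shows "\<exists>z0>0. L z0 > 0 \<and> (\<forall>k::nat. L z0 / 2 ^ k \<le> L (2 ^ k * z0))"
proof -
  have "((\<lambda>x. L (2 * x) / L x) \<longlongrightarrow> 1) at_top"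
    using assms by (simp add: slowly_varying_def)
  then have "\<forall>\<^sub>F x in at_top. L (2 * x) / L x > 1 / 2"
    by (rule order_tendstoD) simp
  moreover have "\<forall>\<^sub>F x in at_top. L x > 0" using assms by (simp add: slowly_varying_def)
  ultimately have "\<forall>\<^sub>F x in at_top. L x > 0 \<and> L (2 * x) / L x > 1 / 2"
    by eventually_elim simp
  then obtain N where N: "\<And>x. x \<ge> N \<Longrightarrow> L x > 0 \<and> L (2 * x) / L x > 1 / 2"
    by (auto simp: eventually_at_top_linorder)
  define z0 where "z0 = max N 1"
  have z0: "z0 > 0" "z0 \<ge> N" by (auto simp: z0_def)
  have "L z0 / 2 ^ k \<le> L (2 ^ k * z0)" for k :: nat
  proof (induction k)
    case (Suc k)
    have "N \<le> 2 ^ k * z0" using z0 by (smt (verit) mult_le_cancel_right1 one_le_power)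
    then have "0 < L (2 ^ k * z0) \<and> 1 / 2 < L (2 * (2 ^ k * z0)) / L (2 ^ k * z0)"
      by (rule N)
    then have "L (2 ^ k * z0) / 2 < L (2 * (2 ^ k * z0))"
      by (auto simp: less_divide_eq)
    moreover have "L z0 / 2 ^ Suc k \<le> L (2 ^ k * z0) / 2" using Suc by simp
    ultimately show ?case by (simp add: mult.assoc)
  qed simp
  then show ?thesis using N z0 by auto
qed

lemma exists_doubling_above:
  fixes z z0 :: real
  assumes "0 < z0" "z0 \<le> z"
  shows "\<exists>k::nat. z \<le> 2 ^ k * z0 \<and> 2 ^ k * z0 < 2 * z"
proof -
  obtain m :: nat where "z / z0 < 2 ^ m" using real_arch_pow[of 2 "z / z0"] by auto
  then have ex: "z \<le> 2 ^ m * z0" using assms by (simp add: field_simps)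
  define k where "k = (LEAST k::nat. z \<le> 2 ^ k * z0)"
  have k: "z \<le> 2 ^ k * z0" unfolding k_def by (rule LeastI[where P="\<lambda>k. z \<le> 2 ^ k * z0", OF ex])
  have "2 ^ k * z0 < 2 * z"
  proof (cases k)
    case 0
    then show ?thesis using k assms by simp
  next
    case (Suc j)
    then have "\<not> z \<le> 2 ^ j * z0"
      using not_less_Least[of j "\<lambda>k. z \<le> 2 ^ k * z0"] by (simp add: k_def)
    then show ?thesis using Suc by simp
  qed
  with k show ?thesis by blast
qed

lemma tail_ge_powr_of_slowly_varying:
  assumes "prob_space M" "sets M = sets borel"
    and sv: "slowly_varying L" and \<alpha>: "\<alpha> > 0"
    and tail: "\<forall>x>0. 1 - cdf_of M x = L x * x powr (- \<alpha>)"
  shows "\<exists>c>0. \<exists>z0. \<forall>z\<ge>z0. c * z powr (- (\<alpha> + 1)) \<le> 1 - cdf_of M z"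
proof -
  obtain z0 where z0: "z0 > 0" "L z0 > 0" and L2: "\<And>k::nat. L z0 / 2 ^ k \<le> L (2 ^ k * z0)"
    using slowly_varying_doubling_lower[OF sv] by blast
  \<comment> \<open>along \<open>2\<^sup>k z0\<close> the slowly varying factor decays at most like \<open>1 / z\<close>, which costs one power\<close>
  define c where "c = L z0 * z0 * 2 powr (- \<alpha> - 1)"
  have "c * z powr (- (\<alpha> + 1)) \<le> 1 - cdf_of M z" if z: "z \<ge> z0" for z
  proof -
    obtain k :: nat where k: "z \<le> 2 ^ k * z0" "2 ^ k * z0 < 2 * z"
      using exists_doubling_above[OF z0(1) z] by blast
    define w where "w = 2 ^ k * z0"
    have pos: "0 < z" "0 < w" using z z0 by (auto simp: w_def)
    have "c * z powr (- (\<alpha> + 1)) = L z0 / (2 * z / z0) * (2 * z) powr (- \<alpha>)"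
      using pos z0 by (simp add: c_def powr_mult powr_diff powr_minus field_simps)
    also have "\<dots> \<le> L (2 ^ k * z0) * w powr (- \<alpha>)"
    proof (intro mult_mono)
      have "L z0 / (2 * z / z0) \<le> L z0 / 2 ^ k"
        using k pos z0 by (intro divide_left_mono) (auto simp: field_simps)
      then show "L z0 / (2 * z / z0) \<le> L (2 ^ k * z0)" using L2 by (rule order_trans)
      show "(2 * z) powr (- \<alpha>) \<le> w powr (- \<alpha>)"
        using k pos \<alpha> by (intro powr_mono2') (auto simp: w_def)
      show "0 \<le> L (2 ^ k * z0)" using L2[of k] z0 pos by (smt (verit) divide_nonneg_pos zero_less_power)
    qed simp
    also have "\<dots> = 1 - cdf_of M w" using tail pos by (simp add: w_def)
    also have "\<dots> \<le> 1 - cdf_of M z"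
      using cdf_of_mono[OF assms(1,2) k(1)] by (simp add: w_def)
    finally show ?thesis .
  qed
  moreover have "c > 0" using z0 by (simp add: c_def)
  ultimately show ?thesis by blast
qed

section \<open>Sums of independent copies\<close>

lemma integrable_centered_moments:
  fixes M :: "real measure"
  assumes "prob_space M" and sM: "sets M = sets borel" and \<delta>: "\<delta> > 0"
    and mom: "integrable M (\<lambda>x. \<bar>x\<bar> powr (2 + \<delta>))"
  shows "integrable M (\<lambda>v. \<bar>v - \<mu>\<bar> powr (2 + \<delta>))" and "integrable M (\<lambda>v. (v - \<mu>)\<^sup>2)"
    and "integrable M (\<lambda>v. v - \<mu>)"
proof -
  interpret prob_space M by fact
  have bm: "borel_measurable M = borel_measurable borel" by (rule measurable_cong_sets[OF sM refl])
  show int_p: "integrable M (\<lambda>v. \<bar>v - \<mu>\<bar> powr (2 + \<delta>))"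
  proof (rule Bochner_Integration.integrable_bound)
    show "integrable M (\<lambda>v. 2 powr (2 + \<delta>) * (\<bar>v\<bar> powr (2 + \<delta>) + \<bar>\<mu>\<bar> powr (2 + \<delta>)))"
      using mom by simp
    show "(\<lambda>v. \<bar>v - \<mu>\<bar> powr (2 + \<delta>)) \<in> borel_measurable M" unfolding bm by measurable
    show "AE v in M. norm (\<bar>v - \<mu>\<bar> powr (2 + \<delta>))
        \<le> norm (2 powr (2 + \<delta>) * (\<bar>v\<bar> powr (2 + \<delta>) + \<bar>\<mu>\<bar> powr (2 + \<delta>)))"
      using abs_diff_powr_le \<delta> by (intro AE_I2) simp
  qed
  show int_2: "integrable M (\<lambda>v. (v - \<mu>)\<^sup>2)"
  proof (rule Bochner_Integration.integrable_bound)
    show "integrable M (\<lambda>v. 1 + \<bar>v - \<mu>\<bar> powr (2 + \<delta>))" using int_p by simp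
    show "(\<lambda>v. (v - \<mu>)\<^sup>2) \<in> borel_measurable M" unfolding bm by measurable
    have "(v - \<mu>)\<^sup>2 \<le> 1 + \<bar>v - \<mu>\<bar> powr (2 + \<delta>)" for v
      using abs_powr_le_one_plus_powr[of 2 "2 + \<delta>" "v - \<mu>"] \<delta>
      by (cases "v = \<mu>") (simp_all add: powr_numeral)
    then show "AE v in M. norm ((v - \<mu>)\<^sup>2) \<le> norm (1 + \<bar>v - \<mu>\<bar> powr (2 + \<delta>))"
      by (intro AE_I2) simp
  qed
  show "integrable M (\<lambda>v. v - \<mu>)"
    by (rule square_integrable_imp_integrable[OF _ int_2]) (simp add: bm)
qed

lemma
  fixes M :: "'a measure" and f :: "'a \<Rightarrow> real"
  assumes "prob_space M" and i: "i \<in> I" and f: "integrable M f"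
  shows integrable_PiM_component: "integrable (PiM I (\<lambda>_. M)) (\<lambda>x. f (x i))"
    and integral_PiM_component: "(\<integral>x. f (x i) \<partial>PiM I (\<lambda>_. M)) = integral\<^sup>L M f"
proof -
  have distr: "distr (PiM I (\<lambda>_. M)) M (\<lambda>x. x i) = M"
    using distr_PiM_component[of I "\<lambda>_. M" i] assms(1) i by simp
  have [measurable]: "(\<lambda>x. x i) \<in> measurable (PiM I (\<lambda>_. M)) M" using i by measurable
  have [measurable]: "f \<in> borel_measurable M" using f by simp
  show "integrable (PiM I (\<lambda>_. M)) (\<lambda>x. f (x i))"
    using integrable_distr_eq[of "\<lambda>x. x i" "PiM I (\<lambda>_. M)" M f] f distr by simp
  show "(\<integral>x. f (x i) \<partial>PiM I (\<lambda>_. M)) = integral\<^sup>L M f"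
    using integral_distr[of "\<lambda>x. x i" "PiM I (\<lambda>_. M)" M f] distr by simp
qed

lemma integral_PiM_weighted_pair:
  fixes M :: "real measure" and h W :: "real \<Rightarrow> real"
  assumes "prob_space M" and fin: "finite I" and k: "k \<in> I" and ij: "i \<in> I - {k}" "j \<in> I - {k}"
    and h: "integrable M h" and W: "W \<in> borel_measurable M" "integrable M (\<lambda>v. (W v)\<^sup>2)"
    and mean: "integral\<^sup>L M W = 0"
  shows "integrable (PiM I (\<lambda>_. M)) (\<lambda>x. h (x k) * W (x i) * W (x j))"
    and "(\<integral>x. h (x k) * W (x i) * W (x j) \<partial>PiM I (\<lambda>_. M))
           = (if i = j then integral\<^sup>L M h * integral\<^sup>L M (\<lambda>v. (W v)\<^sup>2) else 0)"
proof -
  interpret prob_space M by fact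
  interpret product_sigma_finite "\<lambda>_::'i. M"
    by (simp add: product_sigma_finite_def prob_space_imp_sigma_finite prob_space_axioms)
  have int_W: "integrable M W" by (rule square_integrable_imp_integrable[OF W])
  \<comment> \<open>\<open>g l\<close> is the factor of the integrand that depends on the coordinate \<open>l\<close>\<close>
  define g where "g l v = (if l = k then h v else 1) * (if l = i then W v else 1) * (if l = j then W v else 1)"
    for l v
  have ik: "i \<noteq> k" "j \<noteq> k" using ij by auto
  have int_g: "integrable M (g l)" for l
  proof -
    consider "l = k" | "l \<noteq> k" "l = i" "l = j" | "l \<noteq> k" "l = i" "l \<noteq> j"
      | "l \<noteq> k" "l \<noteq> i" "l = j" | "l \<noteq> k" "l \<noteq> i" "l \<noteq> j" by blast
    then show ?thesis
    proof cases
      case 1 then show ?thesis using ik h by (simp add: g_def[abs_def])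
    next
      case 2 then show ?thesis using W(2) by (simp add: g_def[abs_def] power2_eq_square)
    qed (use int_W in \<open>auto simp: g_def[abs_def]\<close>)
  qed
  have prod_g: "h (x k) * W (x i) * W (x j) = (\<Prod>l\<in>I. g l (x l))" for x
    using ij k fin unfolding g_def prod.distrib by (simp add: prod.delta)
  show "integrable (PiM I (\<lambda>_. M)) (\<lambda>x. h (x k) * W (x i) * W (x j))"
    unfolding prod_g using int_g fin by (intro product_integrable_prod) auto
  have "(\<integral>x. h (x k) * W (x i) * W (x j) \<partial>PiM I (\<lambda>_. M)) = (\<Prod>l\<in>I. integral\<^sup>L M (g l))"
    unfolding prod_g using int_g fin by (intro product_integral_prod) auto
  also have "\<dots> = (if i = j then integral\<^sup>L M h * integral\<^sup>L M (\<lambda>v. (W v)\<^sup>2) else 0)"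
  proof (cases "i = j")
    case True
    then have "integral\<^sup>L M (g l) = (if l = k then integral\<^sup>L M h else 1)
        * (if l = i then integral\<^sup>L M (\<lambda>v. (W v)\<^sup>2) else 1)" for l
      using ik by (auto simp: g_def[abs_def] power2_eq_square prob_space)
    then show ?thesis using True ij k fin by (simp add: prod.distrib prod.delta)
  next
    case False
    then have "integral\<^sup>L M (g i) = 0" using ik mean by (simp add: g_def[abs_def])
    then show ?thesis using False ij fin by (auto intro: prod_zero)
  qed
  finally show "(\<integral>x. h (x k) * W (x i) * W (x j) \<partial>PiM I (\<lambda>_. M))
      = (if i = j then integral\<^sup>L M h * integral\<^sup>L M (\<lambda>v. (W v)\<^sup>2) else 0)" .
qed

lemma integral_PiM_weighted_square_sum:
  fixes M :: "real measure" and h W :: "real \<Rightarrow> real"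
  assumes "prob_space M" and fin: "finite I" and k: "k \<in> I"
    and h: "integrable M h" and W: "W \<in> borel_measurable M" "integrable M (\<lambda>v. (W v)\<^sup>2)"
    and mean: "integral\<^sup>L M W = 0"
  shows "integrable (PiM I (\<lambda>_. M)) (\<lambda>x. h (x k) * (\<Sum>i\<in>I - {k}. W (x i))\<^sup>2)"
    and "(\<integral>x. h (x k) * (\<Sum>i\<in>I - {k}. W (x i))\<^sup>2 \<partial>PiM I (\<lambda>_. M))
           = integral\<^sup>L M h * real (card (I - {k})) * integral\<^sup>L M (\<lambda>v. (W v)\<^sup>2)"
proof -
  define J where "J = I - {k}"
  note pair = integral_PiM_weighted_pair[OF assms(1-3) _ _ h W mean, folded J_def]
  have expand: "h (x k) * (\<Sum>i\<in>J. W (x i))\<^sup>2 = (\<Sum>i\<in>J. \<Sum>j\<in>J. h (x k) * W (x i) * W (x j))" for x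
    unfolding power2_eq_square sum_product by (simp add: sum_distrib_left mult.assoc)
  show "integrable (PiM I (\<lambda>_. M)) (\<lambda>x. h (x k) * (\<Sum>i\<in>I - {k}. W (x i))\<^sup>2)"
    unfolding J_def[symmetric] expand using pair(1) by auto
  have "(\<integral>x. h (x k) * (\<Sum>i\<in>J. W (x i))\<^sup>2 \<partial>PiM I (\<lambda>_. M))
      = (\<Sum>i\<in>J. \<Sum>j\<in>J. if i = j then integral\<^sup>L M h * integral\<^sup>L M (\<lambda>v. (W v)\<^sup>2) else 0)"
    unfolding expand using pair by (simp add: Bochner_Integration.integral_sum Bochner_Integration.integrable_sum)
  also have "\<dots> = integral\<^sup>L M h * real (card J) * integral\<^sup>L M (\<lambda>v. (W v)\<^sup>2)"
    using fin by (simp add: J_def)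
  finally show "(\<integral>x. h (x k) * (\<Sum>i\<in>I - {k}. W (x i))\<^sup>2 \<partial>PiM I (\<lambda>_. M))
      = integral\<^sup>L M h * real (card (I - {k})) * integral\<^sup>L M (\<lambda>v. (W v)\<^sup>2)"
    by (simp add: J_def)
qed

lemma ptilde_ge_half_tail:
  fixes M :: "real measure"
  assumes "prob_space M" and sM: "sets M = sets borel"
    and var: "integrable M (\<lambda>v. (v - \<mu>)\<^sup>2)" and mean: "integral\<^sup>L M (\<lambda>v. v - \<mu>) = 0"
    and n: "n \<ge> 1" and t: "t > 0"
    and small_var: "real (n - 1) * integral\<^sup>L M (\<lambda>v. (v - \<mu>)\<^sup>2) \<le> t\<^sup>2 / 2"
  shows "(1 - cdf_of M (\<gamma> - real (n - 1) * \<mu> + t)) / 2 \<le> ptilde M n \<gamma>"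
proof -
  interpret prob_space M by fact
  define Pm where "Pm = PiM {..<n} (\<lambda>_. M)"
  interpret Pm: prob_space Pm unfolding Pm_def by (intro prob_space_PiM prob_space_axioms)
  define a where "a = \<gamma> - real (n - 1) * \<mu> + t"
  define h :: "real \<Rightarrow> real" where "h = indicator {a..}"
  define J where "J = {..<n} - {0}"
  define S where "S = {x \<in> space Pm. \<gamma> \<le> (\<Sum>i<n. x i)}"
  define V where "V = integral\<^sup>L M (\<lambda>v. (v - \<mu>)\<^sup>2)"
  have bm: "borel_measurable M = borel_measurable borel" by (rule measurable_cong_sets[OF sM refl])
  have n0: "0 \<in> {..<n}" using n by simp
  have [measurable]: "(\<lambda>x. x i) \<in> borel_measurable Pm" if "i \<in> {..<n}" for i
    using measurable_component_singleton[OF that, of "\<lambda>_. M"] sM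
    by (simp add: Pm_def cong: measurable_cong_sets)
  have S: "S \<in> sets Pm" unfolding S_def by measurable
  have int_h: "integrable M h"
    unfolding h_def using sM by (intro integrable_real_indicator) (auto simp: emeasure_eq_measure)
  have "(\<lambda>v. v - \<mu>) \<in> borel_measurable M" by (simp add: bm)
  note square_sum = integral_PiM_weighted_square_sum[OF prob_space_axioms finite_lessThan n0 int_h
      this var mean, folded J_def Pm_def]
  have int_hx: "integrable Pm (\<lambda>x. h (x 0))" and E_hx: "integral\<^sup>L Pm (\<lambda>x. h (x 0)) = integral\<^sup>L M h"
    unfolding Pm_def by (intro integrable_PiM_component integral_PiM_component prob_space_axioms n0 int_h)+
  \<comment> \<open>Chebyshev's inequality for the last \<open>n - 1\<close> summands, weighted by the event \<open>x 0 \<ge> a\<close>.\<close>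
  have "(\<integral>x. h (x 0) * (1 - (\<Sum>i\<in>J. x i - \<mu>)\<^sup>2 / t\<^sup>2) \<partial>Pm) \<le> integral\<^sup>L Pm (indicator S)"
  proof (rule integral_mono)
    show "integrable Pm (\<lambda>x. h (x 0) * (1 - (\<Sum>i\<in>J. x i - \<mu>)\<^sup>2 / t\<^sup>2))"
      using int_hx square_sum(1) by (simp add: right_diff_distrib)
    show "integrable Pm (indicator S :: _ \<Rightarrow> real)"
      using S by (intro integrable_real_indicator) (auto simp: Pm.emeasure_eq_measure)
  next
    fix x assume x: "x \<in> space Pm"
    have "(\<Sum>i<n. x i) = x 0 + (\<Sum>i\<in>J. x i - \<mu>) + real (n - 1) * \<mu>"
      using n0 by (simp add: J_def sum.remove sum_subtractf)
    then have "indicator {a - t..} (x 0 + (\<Sum>i\<in>J. x i - \<mu>)) = (indicator S x :: real)"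
      using x by (simp add: S_def a_def indicator_def)
    then show "h (x 0) * (1 - (\<Sum>i\<in>J. x i - \<mu>)\<^sup>2 / t\<^sup>2) \<le> indicator S x"
      unfolding h_def using indicator_mult_one_minus_square_le[OF t] by metis
  qed
  also have "\<dots> = ptilde M n \<gamma>" using S by (simp add: ptilde_def S_def Pm_def)
  finally have "integral\<^sup>L M h - integral\<^sup>L M h * real (n - 1) * V / t\<^sup>2 \<le> ptilde M n \<gamma>"
    using int_hx square_sum n0 by (simp add: right_diff_distrib E_hx J_def V_def)
  moreover have "integral\<^sup>L M h * real (n - 1) * V / t\<^sup>2 \<le> integral\<^sup>L M h / 2"
  proof -
    have "integral\<^sup>L M h * (real (n - 1) * V) \<le> integral\<^sup>L M h * (t\<^sup>2 / 2)"
      using small_var by (intro mult_left_mono) (simp_all add: h_def V_def)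
    then show ?thesis using t by (simp add: field_simps)
  qed
  moreover have "1 - cdf_of M a \<le> integral\<^sup>L M h"
    using one_minus_cdf_of_le_measure_atLeast[OF prob_space_axioms sM] sM by (simp add: h_def)
  ultimately show ?thesis by (simp add: a_def)
qed

section \<open>Truncation and the Chernoff bound\<close>

lemma
  fixes M :: "real measure"
  assumes "prob_space M" and sM: "sets M = sets borel" and Fu: "cdf_of M u > 0"
  shows prob_space_truncated: "prob_space (truncated M u)"
    and sets_truncated: "sets (truncated M u) = sets borel"
proof -
  interpret prob_space M by fact
  show "sets (truncated M u) = sets borel" by (simp add: truncated_def sM)
  have "emeasure (truncated M u) (space (truncated M u))
      = (\<integral>\<^sup>+ x. ennreal (1 / cdf_of M u) * indicator {..u} x \<partial>M)"
    unfolding truncated_def using sM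
    by (subst emeasure_density) (auto intro!: nn_integral_cong simp: indicator_def sets_eq_imp_space_eq[OF sM])
  also have "\<dots> = 1"
    using sM Fu by (simp add: nn_integral_cmult_indicator emeasure_eq_measure cdf_of_def ennreal_mult''[symmetric])
  finally show "prob_space (truncated M u)" by (rule prob_spaceI)
qed

lemma ptilde_le_exp_mgf:
  fixes G :: "real measure"
  assumes "prob_space G" and sG: "sets G = sets borel" and s: "s > 0" and m: "m \<ge> 0"
    and mgf: "(\<integral>\<^sup>+ v. ennreal (exp (s * (v - \<mu>))) \<partial>G) \<le> ennreal m"
  shows "ptilde G n \<gamma> \<le> exp (- s * (\<gamma> - real n * \<mu>)) * m ^ n"
proof -
  interpret product_sigma_finite "\<lambda>_::nat. G"
    by (simp add: product_sigma_finite_def prob_space_imp_sigma_finite assms(1))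
  define Q where "Q = PiM {..<n} (\<lambda>_. G)"
  interpret Q: prob_space Q unfolding Q_def by (intro prob_space_PiM) (simp add: assms(1))
  define S where "S = {x \<in> space Q. \<gamma> \<le> (\<Sum>i<n. x i)}"
  define c where "c = exp (- s * (\<gamma> - real n * \<mu>))"
  have [measurable]: "(\<lambda>x. x i) \<in> borel_measurable Q" if "i \<in> {..<n}" for i
    using measurable_component_singleton[OF that, of "\<lambda>_. G"] sG
    by (simp add: Q_def cong: measurable_cong_sets)
  have S: "S \<in> sets Q" unfolding S_def by measurable
  have f: "(\<lambda>v. ennreal (exp (s * (v - \<mu>)))) \<in> borel_measurable G"
    using sG by (simp cong: measurable_cong_sets)
  \<comment> \<open>Markov's inequality for \<open>exp (s * (S_n - \<gamma>))\<close>\<close>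
  have "emeasure Q S \<le> (\<integral>\<^sup>+ x. ennreal c * (\<Prod>i<n. ennreal (exp (s * (x i - \<mu>)))) \<partial>Q)"
  proof (subst nn_integral_indicator[OF S, symmetric], intro nn_integral_mono)
    fix x assume "x \<in> space Q"
    have "c * (\<Prod>i<n. exp (s * (x i - \<mu>))) = exp (s * ((\<Sum>i<n. x i) - \<gamma>))"
      by (simp add: c_def exp_sum[symmetric] exp_add[symmetric] sum_distrib_left sum_subtractf algebra_simps)
    moreover have "indicator S x \<le> ennreal (exp (s * ((\<Sum>i<n. x i) - \<gamma>)))"
      using s by (auto simp: S_def indicator_def)
    ultimately show "indicator S x \<le> ennreal c * (\<Prod>i<n. ennreal (exp (s * (x i - \<mu>))))"
      by (simp add: prod_ennreal ennreal_mult''[symmetric] prod_nonneg)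
  qed
  also have "\<dots> = ennreal c * (\<integral>\<^sup>+ x. (\<Prod>i<n. ennreal (exp (s * (x i - \<mu>)))) \<partial>Q)"
    by (rule nn_integral_cmult) measurable
  also have "(\<integral>\<^sup>+ x. (\<Prod>i<n. ennreal (exp (s * (x i - \<mu>)))) \<partial>Q)
      = (\<integral>\<^sup>+ v. ennreal (exp (s * (v - \<mu>))) \<partial>G) ^ n"
    unfolding Q_def using f by (subst product_nn_integral_prod) auto
  also have "ennreal c * \<dots> \<le> ennreal c * ennreal m ^ n"
    using mgf by (intro mult_left_mono power_mono) simp_all
  finally have "emeasure Q S \<le> ennreal (c * m ^ n)"
    using m by (simp add: ennreal_mult'' ennreal_power c_def)
  then have "measure Q S \<le> c * m ^ n"
    using m by (simp add: Q.emeasure_eq_measure c_def)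
  then show ?thesis by (simp add: ptilde_def Q_def S_def c_def)
qed

lemma truncated_exp_density_le:
  fixes s \<delta> u \<mu> D F v :: real
  assumes s: "s > 0" and \<delta>: "\<delta> > 0" and uD: "u - \<mu> \<le> D" and u: "\<mu> < u" and F: "F > 0"
  shows "indicator {..u} v / F * exp (s * (v - \<mu>)) \<le> (indicator {..u} v + s * (v - \<mu>)
    + s\<^sup>2 / 2 * (exp 1 * (v - \<mu>)\<^sup>2 + \<bar>v - \<mu>\<bar> powr (2 + \<delta>) * s powr \<delta> * exp (s * D))) / F"
proof (cases "v \<le> u")
  case True
  then show ?thesis
    using exp_le_moment_polynomial[OF s _ \<delta>, of "v - \<mu>" D] uD F by (simp add: divide_right_mono)
next
  case False
  then show ?thesis using u s F by simp
qed

lemma nn_integral_truncated_exp: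
  fixes M :: "real measure"
  assumes "prob_space M" and sM: "sets M = sets borel" and Fu: "cdf_of M u > 0" and s: "s > 0"
  shows "integrable M (\<lambda>v. indicator {..u} v / cdf_of M u * exp (s * (v - \<mu>)))"
    and "(\<integral>\<^sup>+ v. ennreal (exp (s * (v - \<mu>))) \<partial>truncated M u)
           = ennreal (\<integral>v. indicator {..u} v / cdf_of M u * exp (s * (v - \<mu>)) \<partial>M)"
proof -
  interpret prob_space M by fact
  define \<phi> where "\<phi> v = indicator {..u} v / cdf_of M u * exp (s * (v - \<mu>))" for v
  have \<phi>_nonneg: "\<phi> v \<ge> 0" for v using Fu by (simp add: \<phi>_def)
  have \<phi>_le: "\<phi> v \<le> exp (s * (u - \<mu>)) / cdf_of M u" for v
    using s Fu by (auto simp: \<phi>_def indicator_def divide_right_mono)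
  have "\<phi> \<in> borel_measurable M"
    unfolding \<phi>_def[abs_def] using sM by (simp cong: measurable_cong_sets)
  with \<phi>_nonneg \<phi>_le show int: "integrable M \<phi>"
    by (intro integrable_const_bound[where B="exp (s * (u - \<mu>)) / cdf_of M u"] AE_I2) auto
  have "(\<integral>\<^sup>+ v. ennreal (exp (s * (v - \<mu>))) \<partial>truncated M u)
      = (\<integral>\<^sup>+ v. ennreal (indicator {..u} v / cdf_of M u) * ennreal (exp (s * (v - \<mu>))) \<partial>M)"
    unfolding truncated_def using sM by (subst nn_integral_density) (auto cong: measurable_cong_sets)
  also have "\<dots> = (\<integral>\<^sup>+ v. ennreal (\<phi> v) \<partial>M)"
    using Fu by (intro nn_integral_cong) (simp add: \<phi>_def ennreal_mult''[symmetric])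
  also have "\<dots> = ennreal (integral\<^sup>L M \<phi>)"
    using int \<phi>_nonneg by (intro nn_integral_eq_integral) auto
  finally show "(\<integral>\<^sup>+ v. ennreal (exp (s * (v - \<mu>))) \<partial>truncated M u) = ennreal (integral\<^sup>L M \<phi>)" .
qed

text \<open>The truncation point enters only through \<open>u - \<mu> \<le> D\<close>; the factor \<open>1 / cdf_of M \<mu>\<close>
  bounds the normalisation \<open>1 / cdf_of M u\<close> when \<open>u > \<mu>\<close>.\<close>
lemma nn_integral_truncated_exp_le:
  fixes M :: "real measure"
  assumes "prob_space M" and sM: "sets M = sets borel" and Fu: "cdf_of M u > 0"
    and F\<mu>: "cdf_of M \<mu> > 0" and s: "s > 0" and \<delta>: "\<delta> > 0" and uD: "u - \<mu> \<le> D"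
    and int1: "integrable M (\<lambda>v. v - \<mu>)" and mean: "integral\<^sup>L M (\<lambda>v. v - \<mu>) = 0"
    and int2: "integrable M (\<lambda>v. (v - \<mu>)\<^sup>2)"
    and int3: "integrable M (\<lambda>v. \<bar>v - \<mu>\<bar> powr (2 + \<delta>))"
  shows "(\<integral>\<^sup>+ v. ennreal (exp (s * (v - \<mu>))) \<partial>truncated M u)
     \<le> ennreal (1 + s\<^sup>2 / (2 * cdf_of M \<mu>) * (exp 1 * integral\<^sup>L M (\<lambda>v. (v - \<mu>)\<^sup>2)
          + integral\<^sup>L M (\<lambda>v. \<bar>v - \<mu>\<bar> powr (2 + \<delta>)) * s powr \<delta> * exp (s * D)))"
proof -
  interpret prob_space M by fact
  define F where "F = cdf_of M u"
  define B where "B = exp 1 * integral\<^sup>L M (\<lambda>v. (v - \<mu>)\<^sup>2)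
    + integral\<^sup>L M (\<lambda>v. \<bar>v - \<mu>\<bar> powr (2 + \<delta>)) * s powr \<delta> * exp (s * D)"
  define \<phi> where "\<phi> v = indicator {..u} v / F * exp (s * (v - \<mu>))" for v
  have B: "B \<ge> 0" by (simp add: B_def)
  have int_\<phi>: "integrable M \<phi>" and eq_\<phi>:
    "(\<integral>\<^sup>+ v. ennreal (exp (s * (v - \<mu>))) \<partial>truncated M u) = ennreal (integral\<^sup>L M \<phi>)"
    unfolding \<phi>_def[abs_def] F_def by (rule nn_integral_truncated_exp[OF assms(1-3) s])+
  have int_ind: "integrable M (indicator {..u} :: real \<Rightarrow> real)"
    using sM by (intro integrable_real_indicator) (auto simp: emeasure_eq_measure)
  have "integral\<^sup>L M \<phi> \<le> 1 + s\<^sup>2 / (2 * cdf_of M \<mu>) * B"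
  proof (cases "u \<le> \<mu>")
    case True
    have "\<phi> v \<le> indicator {..u} v / F" for v
      using True s Fu by (auto simp: \<phi>_def F_def indicator_def mult_nonneg_nonpos divide_right_mono)
    then have "integral\<^sup>L M \<phi> \<le> integral\<^sup>L M (\<lambda>v. indicator {..u} v / F)"
      using int_\<phi> int_ind by (intro integral_mono) auto
    also have "\<dots> = 1" using Fu sM by (simp add: F_def cdf_of_def)
    moreover have "0 \<le> s\<^sup>2 / (2 * cdf_of M \<mu>) * B" using B F\<mu> by simp
    ultimately show ?thesis by linarith
  next
    case False
    have F: "cdf_of M \<mu> \<le> F" unfolding F_def using False by (intro cdf_of_mono assms(1) sM) auto
    define R where "R v = (indicator {..u} v + s * (v - \<mu>) + s\<^sup>2 / 2 * (exp 1 * (v - \<mu>)\<^sup>2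
        + \<bar>v - \<mu>\<bar> powr (2 + \<delta>) * s powr \<delta> * exp (s * D))) / F" for v
    have int_R: "integrable M R" unfolding R_def[abs_def] using int1 int2 int3 int_ind by simp
    have "\<phi> v \<le> R v" for v
      using truncated_exp_density_le[OF s \<delta> uD _ Fu, of v] False by (simp add: \<phi>_def R_def F_def)
    then have "integral\<^sup>L M \<phi> \<le> integral\<^sup>L M R" using int_\<phi> int_R by (intro integral_mono)
    also have "integral\<^sup>L M R = (F + s * 0 + s\<^sup>2 / 2 * B) / F"
      unfolding R_def[abs_def] B_def using int1 int2 int3 int_ind sM
      by (simp add: Bochner_Integration.integral_add Bochner_Integration.integrable_add
          mean F_def cdf_of_def)
    also have "\<dots> = 1 + s\<^sup>2 / (2 * F) * B" using Fu by (simp add: F_def field_simps)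
    also have "\<dots> \<le> 1 + s\<^sup>2 / (2 * cdf_of M \<mu>) * B"
      using F F\<mu> B by (intro add_left_mono mult_right_mono divide_left_mono) auto
    finally show ?thesis .
  qed
  then show ?thesis unfolding eq_\<phi> B_def by (rule ennreal_leI)
qed

section \<open>The moderate deviation regime\<close>

locale moderate_deviation = prob_space M for M :: "real measure" +
  fixes \<mu> \<delta> :: real and \<gamma> :: "nat \<Rightarrow> real"
  assumes sets_M: "sets M = sets borel"
    and delta_pos: "\<delta> > 0"
    and moment: "integrable M (\<lambda>x. \<bar>x\<bar> powr (2 + \<delta>))"
    and mean: "\<mu> = expectation (\<lambda>x. x)"
    and deviation: "filterlim (\<lambda>n. (\<gamma> n - real n * \<mu>) / sqrt (real n * ln (real n))) at_top sequentially"
begin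

lemmas integrable_centered = integrable_centered_moments[OF prob_space_axioms sets_M delta_pos moment, where \<mu> = \<mu>]

lemma expectation_centered: "expectation (\<lambda>v. v - \<mu>) = 0"
proof -
  have "integrable M (\<lambda>v. (v - \<mu>) + \<mu>)"
    by (intro Bochner_Integration.integrable_add integrable_centered(3) integrable_const)
  then show ?thesis using mean by (simp add: prob_space)
qed

lemma cdf_at_mean_pos: "cdf_of M \<mu> > 0"
  by (rule cdf_of_mean_pos[OF prob_space_axioms sets_M integrable_centered(3) expectation_centered])

lemma eventually_deviation_ge: "\<forall>\<^sub>F n in sequentially. H * sqrt (real n * ln (real n)) \<le> \<gamma> n - real n * \<mu>"
  using deviation[unfolded filterlim_at_top, rule_format, of H] eventually_ge_at_top[of 3]
proof eventually_elim
  case (elim n)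
  then have "sqrt (real n * ln (real n)) > 0" using one_le_ln_nat[of n] by simp
  then show ?case using elim(1) by (simp add: pos_le_divide_eq)
qed

lemma deviation_tendsto_at_top: "filterlim (\<lambda>n. \<gamma> n - real n * \<mu>) at_top sequentially"
proof (rule filterlim_at_top_mono[OF _ eventually_deviation_ge[of 1]])
  show "filterlim (\<lambda>n. 1 * sqrt (real n * ln (real n))) at_top sequentially" by real_asymp
qed

lemma ptilde_ge_powr:
  assumes tail: "\<forall>z\<ge>z0. c * z powr (- \<beta>) \<le> 1 - cdf_of M z"
    and n: "n \<ge> 1" and z0: "z0 \<le> g - real n * \<mu>"
    and large: "(\<bar>\<mu>\<bar> + sqrt (2 * expectation (\<lambda>v. (v - \<mu>)\<^sup>2) + 1)) * sqrt (real n) \<le> g - real n * \<mu>"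
  shows "c / 2 * (2 * (g - real n * \<mu>)) powr (- \<beta>) \<le> ptilde M n g"
proof -
  define x where "x = g - real n * \<mu>"
  define V where "V = expectation (\<lambda>v. (v - \<mu>)\<^sup>2)"
  define t where "t = sqrt (2 * real n * V + 1)"
  have V: "V \<ge> 0" by (simp add: V_def)
  have t: "t > 0" using V by (simp add: t_def add_nonneg_pos)
  have "0 \<le> (\<bar>\<mu>\<bar> + sqrt (2 * V + 1)) * sqrt (real n)" using V by simp
  then have "0 \<le> x" using large unfolding x_def V_def by (rule order_trans)
  moreover have "z0 \<le> x" using z0 by (simp add: x_def)
  ultimately have "c * (2 * x) powr (- \<beta>) \<le> 1 - cdf_of M (2 * x)" using tail by simp
  moreover have "g - real (n - 1) * \<mu> + t \<le> 2 * x"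
  proof -
    have "t \<le> sqrt ((2 * V + 1) * real n)"
      unfolding t_def using V n by (intro real_sqrt_le_mono) (simp add: algebra_simps)
    then have "t \<le> sqrt (2 * V + 1) * sqrt (real n)" by (simp add: real_sqrt_mult)
    moreover have "\<bar>\<mu>\<bar> * 1 \<le> \<bar>\<mu>\<bar> * sqrt (real n)" using n by (intro mult_left_mono) auto
    ultimately have "\<mu> + t \<le> (\<bar>\<mu>\<bar> + sqrt (2 * V + 1)) * sqrt (real n)"
      by (simp add: distrib_right)
    then show ?thesis using large n by (simp add: x_def V_def of_nat_diff algebra_simps)
  qed
  then have "1 - cdf_of M (2 * x) \<le> 1 - cdf_of M (g - real (n - 1) * \<mu> + t)"
    using cdf_of_mono[OF prob_space_axioms sets_M] by simp
  moreover have "real (n - 1) * V \<le> real n * V" using V by (intro mult_right_mono) auto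
  then have "real (n - 1) * V \<le> t\<^sup>2 / 2" using V by (simp add: t_def)
  then have "(1 - cdf_of M (g - real (n - 1) * \<mu> + t)) / 2 \<le> ptilde M n g"
    using ptilde_ge_half_tail[OF prob_space_axioms sets_M integrable_centered(2) expectation_centered n t]
    by (simp add: V_def)
  ultimately show ?thesis by (simp add: x_def)
qed

lemma eventually_ptilde_ge_powr:
  assumes "\<forall>z\<ge>z0. c * z powr (- \<beta>) \<le> 1 - cdf_of M z"
  shows "\<forall>\<^sub>F n in sequentially. c / 2 * (2 * (\<gamma> n - real n * \<mu>)) powr (- \<beta>) \<le> ptilde M n (\<gamma> n)"
proof -
  define H where "H = \<bar>\<mu>\<bar> + sqrt (2 * expectation (\<lambda>v. (v - \<mu>)\<^sup>2) + 1)"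
  show ?thesis
  using eventually_ge_at_top[of 3] eventually_deviation_ge[of H]
    deviation_tendsto_at_top[unfolded filterlim_at_top, rule_format, of z0]
proof eventually_elim
  case (elim n)
  have "H * sqrt (real n) \<le> H * sqrt (real n * ln (real n))"
    using one_le_ln_nat[of n] elim(1) by (intro mult_left_mono) (auto simp: H_def)
  then show ?case
    using ptilde_ge_powr[OF assms, of n] elim by (simp add: H_def)
qed
qed

text \<open>With \<open>s = A log x / x\<close>, the moment generating function of \<open>X - \<mu>\<close> under the truncated law
  is at most \<open>1 + s\<^sup>2 * mgf_constant A\<close>.\<close>
definition mgf_constant :: "real \<Rightarrow> real" where
  "mgf_constant A = (exp 1 * expectation (\<lambda>v. (v - \<mu>)\<^sup>2)
    + expectation (\<lambda>v. \<bar>v - \<mu>\<bar> powr (2 + \<delta>)) * (2 * A) powr \<delta>) / (2 * cdf_of M \<mu>)"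

lemma mgf_constant_nonneg: "mgf_constant A \<ge> 0"
  using cdf_at_mean_pos by (simp add: mgf_constant_def)

lemma ptilde_truncated_le_powr:
  fixes A :: real
  assumes Fu: "cdf_of M u > 0" and A: "A > 0" and x: "2 \<le> g - real n * \<mu>"
    and l: "l > 0" and uD: "u - \<mu> \<le> C * (g - real n * \<mu>) / sqrt l" and AC: "A * C / sqrt l \<le> \<delta> / 2"
    and n_small: "A\<^sup>2 * mgf_constant A * real n * ln (g - real n * \<mu>) \<le> (g - real n * \<mu>)\<^sup>2"
  shows "ptilde (truncated M u) n g \<le> (g - real n * \<mu>) powr (1 - A)"
proof -
  define c where "c = mgf_constant A"
  define x where "x = g - real n * \<mu>"
  define s where "s = A * ln x / x"
  define D where "D = C * x / sqrt l"
  have s: "s > 0" using A x by (simp add: s_def x_def)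
  have c: "c \<ge> 0" unfolding c_def by (rule mgf_constant_nonneg)
  \<comment> \<open>the choice of \<open>s\<close> makes the \<open>(2+\<delta>)\<close>-moment term of the moment generating function bounded\<close>
  have "s powr \<delta> * exp (s * D) \<le> (2 * A) powr \<delta>"
    unfolding s_def D_def using powr_mult_exp_le[OF _ A delta_pos l AC, of x] x
    by (simp add: x_def mult.assoc)
  then have "expectation (\<lambda>v. \<bar>v - \<mu>\<bar> powr (2 + \<delta>)) * s powr \<delta> * exp (s * D)
      \<le> expectation (\<lambda>v. \<bar>v - \<mu>\<bar> powr (2 + \<delta>)) * (2 * A) powr \<delta>"
    by (simp add: mult.assoc mult_left_mono)
  then have "s\<^sup>2 / (2 * cdf_of M \<mu>) * (exp 1 * expectation (\<lambda>v. (v - \<mu>)\<^sup>2)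
        + expectation (\<lambda>v. \<bar>v - \<mu>\<bar> powr (2 + \<delta>)) * s powr \<delta> * exp (s * D))
      \<le> s\<^sup>2 / (2 * cdf_of M \<mu>) * (exp 1 * expectation (\<lambda>v. (v - \<mu>)\<^sup>2)
        + expectation (\<lambda>v. \<bar>v - \<mu>\<bar> powr (2 + \<delta>)) * (2 * A) powr \<delta>)"
    using cdf_at_mean_pos by (intro mult_left_mono add_left_mono) auto
  also have "\<dots> = s\<^sup>2 * c" by (simp add: c_def mgf_constant_def)
  finally have mgf_coefficient_le: "s\<^sup>2 / (2 * cdf_of M \<mu>) * (exp 1 * expectation (\<lambda>v. (v - \<mu>)\<^sup>2)
      + expectation (\<lambda>v. \<bar>v - \<mu>\<bar> powr (2 + \<delta>)) * s powr \<delta> * exp (s * D)) \<le> s\<^sup>2 * c" .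
  have "u - \<mu> \<le> D" using uD by (simp add: D_def x_def)
  then have "(\<integral>\<^sup>+ v. ennreal (exp (s * (v - \<mu>))) \<partial>truncated M u)
      \<le> ennreal (1 + s\<^sup>2 / (2 * cdf_of M \<mu>) * (exp 1 * expectation (\<lambda>v. (v - \<mu>)\<^sup>2)
        + expectation (\<lambda>v. \<bar>v - \<mu>\<bar> powr (2 + \<delta>)) * s powr \<delta> * exp (s * D)))"
    by (rule nn_integral_truncated_exp_le[OF prob_space_axioms sets_M Fu cdf_at_mean_pos s delta_pos _
          integrable_centered(3) expectation_centered integrable_centered(2,1)])
  then have "(\<integral>\<^sup>+ v. ennreal (exp (s * (v - \<mu>))) \<partial>truncated M u) \<le> ennreal (1 + s\<^sup>2 * c)"
    using mgf_coefficient_le by (elim order_trans) (simp add: ennreal_leI)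
  then have "ptilde (truncated M u) n g \<le> exp (- s * x) * (1 + s\<^sup>2 * c) ^ n"
    using ptilde_le_exp_mgf[OF prob_space_truncated sets_truncated, OF prob_space_axioms sets_M Fu
        prob_space_axioms sets_M Fu s] c
    by (simp add: x_def)
  also have "\<dots> \<le> x powr (1 - A)"
    unfolding s_def using exp_mult_one_plus_power_le_powr[of x c A n] x c n_small
    by (simp add: x_def c_def mult.assoc)
  finally show ?thesis by (simp add: x_def)
qed

lemma eventually_ptilde_truncated_le_powr:
  assumes A: "A > 0"
    and u_bound: "\<forall>\<^sub>F n in sequentially. u n \<le> \<mu> + C * ((\<gamma> n - real n * \<mu>) / sqrt (ln (real n)))"
    and u_pos: "\<forall>\<^sub>F n in sequentially. cdf_of M (u n) > 0"
  shows "\<forall>\<^sub>F n in sequentially. ptilde (truncated M (u n)) n (\<gamma> n) \<le> (\<gamma> n - real n * \<mu>) powr (1 - A)"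
proof -
  define c where "c = mgf_constant A"
  define H where "H = max 2 (2 * (A\<^sup>2 * c))"
  define C' where "C' = max C 0"
  have c: "c \<ge> 0" unfolding c_def by (rule mgf_constant_nonneg)
  have "filterlim (\<lambda>n. sqrt (ln (real n))) at_top sequentially" by real_asymp
  then have "\<forall>\<^sub>F n in sequentially. 2 * A * C' / \<delta> \<le> sqrt (ln (real n))"
    by (simp add: filterlim_at_top)
  with eventually_ge_at_top[of 3] eventually_deviation_ge[of H] u_bound u_pos
  show ?thesis
  proof eventually_elim
    case (elim n)
    define x where "x = \<gamma> n - real n * \<mu>"
    have ln_n: "1 \<le> ln (real n)" using one_le_ln_nat elim(1) .
    have "1 * 1 \<le> real n * ln (real n)" using ln_n elim(1) by (intro mult_mono) auto
    then have "2 * 1 \<le> H * sqrt (real n * ln (real n))" by (intro mult_mono) (auto simp: H_def)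
    then have x: "2 \<le> x" using elim(2) by (simp add: x_def)
    have "C * (x / sqrt (ln (real n))) \<le> C' * (x / sqrt (ln (real n)))"
      using x ln_n by (intro mult_right_mono) (auto simp: C'_def)
    then have "u n - \<mu> \<le> C' * x / sqrt (ln (real n))" using elim(3) by (simp add: x_def)
    moreover have "A * C' / sqrt (ln (real n)) \<le> \<delta> / 2"
      using elim(5) ln_n delta_pos by (simp add: divide_le_eq field_simps)
    moreover have "A\<^sup>2 * c * real n * ln x \<le> x\<^sup>2"
      using mult_n_ln_le_square[OF elim(1), of "A\<^sup>2 * c" H x] elim(2) c by (simp add: H_def x_def)
    ultimately show ?case
      using ptilde_truncated_le_powr[OF elim(4) A, where n=n and g="\<gamma> n" and l="ln (real n)" and C=C'] x ln_n
      by (simp add: x_def c_def)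
  qed
qed

lemma ptilde_truncated_ratio_tendsto_0:
  assumes c: "c > 0" and \<beta>: "\<beta> \<ge> 0" and tail: "\<forall>z\<ge>z0. c * z powr (- \<beta>) \<le> 1 - cdf_of M z"
    and u_bound: "\<forall>\<^sub>F n in sequentially. u n \<le> \<mu> + C * ((\<gamma> n - real n * \<mu>) / sqrt (ln (real n)))"
    and u_pos: "\<forall>\<^sub>F n in sequentially. cdf_of M (u n) > 0"
  shows "\<forall>\<^sub>F n in sequentially. ptilde M n (\<gamma> n) > 0"
    and "(\<lambda>n. ptilde (truncated M (u n)) n (\<gamma> n) / ptilde M n (\<gamma> n)) \<longlonglongrightarrow> 0"
proof -
  define x where "x n = \<gamma> n - real n * \<mu>" for n
  have x: "filterlim x at_top sequentially" unfolding x_def by (rule deviation_tendsto_at_top)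
  have A: "\<beta> + 3 > 0" using \<beta> by simp
  have "\<forall>\<^sub>F n in sequentially. ptilde M n (\<gamma> n) > 0 \<and>
      ptilde (truncated M (u n)) n (\<gamma> n) / ptilde M n (\<gamma> n) \<le> 2 powr (\<beta> + 1) / c * x n powr (-2)"
    using eventually_ptilde_ge_powr[OF tail] eventually_ptilde_truncated_le_powr[OF A u_bound u_pos]
      filterlim_at_top_dense[THEN iffD1, OF x, rule_format, of 0]
  proof eventually_elim
    case (elim n)
    have low: "0 < c / 2 * (2 * x n) powr (- \<beta>)" using c elim(3) by (simp add: x_def)
    then have "ptilde (truncated M (u n)) n (\<gamma> n) / ptilde M n (\<gamma> n)
        \<le> x n powr (1 - (\<beta> + 3)) / (c / 2 * (2 * x n) powr (- \<beta>))"
      using elim by (intro frac_le) (simp_all add: x_def ptilde_def)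
    also have "\<dots> = 2 powr (\<beta> + 1) / c * x n powr (-2)"
      using elim(3) c
      by (simp add: powr_mult powr_minus powr_add powr_diff field_simps)
    finally show ?case using low elim(1) by (simp add: x_def)
  qed
  then show "\<forall>\<^sub>F n in sequentially. ptilde M n (\<gamma> n) > 0" by (rule eventually_mono) simp
  have "(\<lambda>n. 2 powr (\<beta> + 1) / c * x n powr (-2)) \<longlonglongrightarrow> 0"
    by (intro tendsto_mult_right_zero tendsto_neg_powr[OF _ x]) simp
  then show "(\<lambda>n. ptilde (truncated M (u n)) n (\<gamma> n) / ptilde M n (\<gamma> n)) \<longlonglongrightarrow> 0"
    by (rule tendsto_sandwich[rotated 2, OF tendsto_const])
      (use \<open>\<forall>\<^sub>F n in sequentially. _ \<and> _\<close> in \<open>auto simp: ptilde_def elim: eventually_mono\<close>)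
qed

end

theorem theorem4:
  fixes M :: "real measure" and f :: "real \<Rightarrow> real" and L :: "real \<Rightarrow> real"
    and \<alpha> \<delta> \<mu> :: real and \<gamma> u :: "nat \<Rightarrow> real"
  assumes prob: "prob_space M"
    and dens_meas: "f \<in> borel_measurable borel"
    and dens_nonneg: "\<forall>x. f x \<ge> 0"
    and dens: "M = density lborel (\<lambda>x. ennreal (f x))"
    and mean: "\<mu> = integral\<^sup>L M (\<lambda>x. x)"
    and sv: "slowly_varying L"
    and alpha: "\<alpha> > 2"
    and tail: "\<forall>x>0. 1 - cdf_of M x = L x * x powr (- \<alpha>)"
    and delta: "\<delta> > 0"
    and moment: "integrable M (\<lambda>x. \<bar>x\<bar> powr (2 + \<delta>))"
    and gamma: "filterlim (\<lambda>n. (\<gamma> n - real n * \<mu>) / sqrt (real n * ln (real n))) at_top sequentially"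
    and u_bound: "\<exists>C. \<forall>\<^sub>F n in sequentially.
                    u n \<le> \<mu> + C * ((\<gamma> n - real n * \<mu>) / sqrt (ln (real n)))"
    and u_pos: "\<forall>\<^sub>F n in sequentially. cdf_of M (u n) > 0"
  shows "\<exists>e :: nat \<Rightarrow> real. e \<longlonglongrightarrow> 0 \<and>
           (\<forall>\<^sub>F n in sequentially.
              ptilde (truncated M (u n)) n (\<gamma> n) - ptilde M n (\<gamma> n)
                = - ptilde M n (\<gamma> n) * (1 + e n))"
proof -
  \<comment> \<open>of the density hypotheses only the Borel sets of \<open>M\<close> are needed\<close>
  have sets_M: "sets M = sets borel" using dens by simp
  interpret moderate_deviation M \<mu> \<delta> \<gamma>
    using prob sets_M delta moment mean gamma by (simp add: moderate_deviation_def moderate_deviation_axioms_def)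
  obtain c z0 where c: "c > 0" and lower_tail: "\<forall>z\<ge>z0. c * z powr (- (\<alpha> + 1)) \<le> 1 - cdf_of M z"
    using tail_ge_powr_of_slowly_varying[OF prob sets_M sv _ tail] alpha by auto
  obtain C where C: "\<forall>\<^sub>F n in sequentially. u n \<le> \<mu> + C * ((\<gamma> n - real n * \<mu>) / sqrt (ln (real n)))"
    using u_bound by blast
  have "\<alpha> + 1 \<ge> 0" using alpha by simp
  note ratio = ptilde_truncated_ratio_tendsto_0[OF c this lower_tail C u_pos]
  show ?thesis
  proof (intro exI conjI)
    show "(\<lambda>n. - (ptilde (truncated M (u n)) n (\<gamma> n) / ptilde M n (\<gamma> n))) \<longlonglongrightarrow> 0"
      using tendsto_minus[OF ratio(2)] by simp
    show "\<forall>\<^sub>F n in sequentially. ptilde (truncated M (u n)) n (\<gamma> n) - ptilde M n (\<gamma> n)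
        = - ptilde M n (\<gamma> n) * (1 + - (ptilde (truncated M (u n)) n (\<gamma> n) / ptilde M n (\<gamma> n)))"
      using ratio(1) by eventually_elim (simp add: field_simps)
  qed
qed

end
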